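(* For all integers $n\ge2$ and $0\le m\le n-1$, define $$\mathcal{K}_{n,m}=-\binom{n}{2}\binom{n}{m}\binom{n-2}{m}-\binom{n}{2}\sum_{k=1}^{m}(-1)^k\Big(\binom{n}{m+k}\binom{n-2}{m-k}+\binom{n}{m-k}\binom{n-2}{m+k}\Big)+\frac{2n-2m-1}{2}\sum_{k=0}^{m}(-1)^k(1+2k)\binom{n}{m+1+k}\binom{n}{m-k}.$$ Then $\mathcal{K}_{n,m}=\dfrac{n^2}{2}\binom{n-1}{m}$.
   Context: $\binom{j}{k}=\frac{j!}{k!(j-k)!}$ if $0\le k\le j$ and $\binom{j}{k}=0$ otherwise (for all integers $j,k$). *)

theory Defs
  imports Complex_Main
begin

definition K :: "nat \<Rightarrow> nat \<Rightarrow> real" where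
  "K n m =
     - real (n choose 2) * real (n choose m) * real ((n - 2) choose m)
     - real (n choose 2) * (\<Sum>k=1..m. (-1)^k *
          (real (n choose (m + k)) * real ((n - 2) choose (m - k))
           + real (n choose (m - k)) * real ((n - 2) choose (m + k))))
     + (2 * real n - 2 * real m - 1) / 2 *
       (\<Sum>k=0..m. (-1)^k * (1 + 2 * real k) * real (n choose (m + 1 + k)) * real (n choose (m - k)))"

end

theory Submission
  imports Defs "HOL-Computational_Algebra.Polynomial"
begin

text \<open>
  Both sums in K n m are coefficients of x^(2m) in products of powers of 1 - x and 1 + x,
  folded around their middle term. The first one is (-1)^m [x^(2m)] (1 - x)^2 (1 - x^2)^(n-2),
  and (n - 1) (1 - x)^2 (1 - x^2)^(n-2) = (n - 1) P - x P' + P' for P = (1 - x^2)^(n-1), which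
  evaluates it to (n - 1 - 2m)/(n - 1) * C(n-1, m). In the second sum the weight 1 + 2k is the
  difference of the two lower indices, so twice the sum is (-1)^m [x^(2m)] of the Wronskian
  f g' - f' g = 2n (1 - x^2)^(n-1) of f = (1 - x)^n and g = (1 + x)^n; it equals n C(n-1, m).
\<close>

lemma sum_fold_even:
  fixes g :: "nat \<Rightarrow> 'a::comm_monoid_add"
  shows "(\<Sum>i=0..2*m. g i) = g m + (\<Sum>k=1..m. g (m + k) + g (m - k))"
proof -
  have up: "(\<Sum>k=1..m. g (m + k)) = (\<Sum>i=m+1..m+m. g i)"
    by (rule sum.reindex_bij_witness[of _ "\<lambda>i. i - m" "\<lambda>k. m + k"]) auto
  have down: "(\<Sum>k=1..m. g (m - k)) = (\<Sum>i=0..<m. g i)"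
    by (rule sum.reindex_bij_witness[of _ "\<lambda>i. m - i" "\<lambda>k. m - k"]) auto
  have "(\<Sum>i=0..2*m. g i) = (\<Sum>i=0..m. g i) + (\<Sum>i=m+1..m+m. g i)"
    unfolding mult_2 by (rule sum.ub_add_nat) simp
  also have "(\<Sum>i=0..m. g i) = g m + (\<Sum>i=0..<m. g i)"
    by (rule sum.last_plus) simp
  finally show ?thesis
    unfolding sum.distrib up down by (simp add: ac_simps)
qed

lemma sum_fold_odd:
  fixes g :: "nat \<Rightarrow> 'a::comm_monoid_add"
  shows "(\<Sum>i=0..2*m+1. g i) = (\<Sum>k=0..m. g (m - k) + g (m + 1 + k))"
proof -
  have up: "(\<Sum>k=0..m. g (m + 1 + k)) = (\<Sum>i=m+1..m+(m+1). g i)"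
    by (rule sum.reindex_bij_witness[of _ "\<lambda>i. i - (m + 1)" "\<lambda>k. m + 1 + k"]) auto
  have down: "(\<Sum>k=0..m. g (m - k)) = (\<Sum>i=0..m. g i)"
    by (rule sum.reindex_bij_witness[of _ "\<lambda>i. m - i" "\<lambda>k. m - k"]) auto
  have "(\<Sum>i=0..2*m+1. g i) = (\<Sum>i=0..m. g i) + (\<Sum>i=m+1..m+(m+1). g i)"
    unfolding mult_2 add.assoc by (rule sum.ub_add_nat) simp
  then show ?thesis
    unfolding sum.distrib up down .
qed

lemma coeff_one_plus_power:
  fixes c :: "'a::comm_semiring_1"
  shows "coeff ([:1, c:] ^ n) i = of_nat (n choose i) * c ^ i"
proof (cases "i \<le> n")
  case True
  then show ?thesis by (simp add: coeff_linear_poly_power)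
next
  case False
  have "degree ([:1, c:] ^ n) \<le> n"
    using degree_power_le[of "[:1, c:]" n] by (cases "c = 0") simp_all
  with False show ?thesis
    by (simp add: coeff_eq_0 binomial_eq_0)
qed

lemma coeff_pCons_0_pderiv: "coeff (pCons 0 (pderiv p)) k = of_nat k * coeff p k"
  by (cases k) (simp_all add: coeff_pderiv)

lemma coeff_one_minus_square_power:
  "coeff ([:1, 0, -1:] ^ q) j =
     (if even j then (-1) ^ (j div 2) * of_nat (q choose (j div 2)) else (0::'a::comm_ring_1))"
proof -
  have "[:1, 0, -1:] = monom (-1::'a) 2 + 1"
    by (simp add: monom_altdef numeral_2_eq_2 one_pCons)
  then have "coeff ([:1, 0, -1:] ^ q) j
      = (\<Sum>k\<le>q. of_nat (q choose k) * (if 2 * k = j then (-1::'a) ^ k else 0))"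
    by (simp add: binomial_ring coeff_sum of_nat_poly monom_power mult_ac)
  also have "\<dots> = (\<Sum>k\<le>q. if k = j div 2 \<and> even j then of_nat (q choose k) * (-1) ^ k else 0)"
    by (intro sum.cong) auto
  also have "\<dots> = (if even j then (-1) ^ (j div 2) * of_nat (q choose (j div 2)) else 0)"
    by (auto simp: mult.commute binomial_eq_0)
  finally show ?thesis .
qed

lemma coeff_one_minus_square_power_even:
  "coeff ([:1, 0, -1:] ^ q) (2 * m) = (-1) ^ m * (of_nat (q choose m) :: 'a::comm_ring_1)"
  by (simp add: coeff_one_minus_square_power)

lemma coeff_one_minus_square_power_odd:
  "coeff ([:1, 0, -1:] ^ q) (2 * m + 1) = (0 :: 'a::comm_ring_1)"
  by (simp add: coeff_one_minus_square_power)

lemma coeff_mult_pderiv_diff: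
  fixes p q :: "'a::idom poly"
  shows "coeff (p * pderiv q - pderiv p * q) n =
    (\<Sum>i\<le>Suc n. (of_nat (Suc n - i) - of_nat i) * coeff p i * coeff q (Suc n - i))"
proof -
  have "coeff (p * pderiv q - pderiv p * q) n
      = coeff (p * pCons 0 (pderiv q)) (Suc n) - coeff (pCons 0 (pderiv p) * q) (Suc n)"
    by simp
  also have "\<dots> = (\<Sum>i\<le>Suc n. coeff p i * (of_nat (Suc n - i) * coeff q (Suc n - i)))
      - (\<Sum>i\<le>Suc n. of_nat i * coeff p i * coeff q (Suc n - i))"
    by (simp only: coeff_mult coeff_pCons_0_pderiv mult.assoc)
  also have "\<dots> = (\<Sum>i\<le>Suc n. (of_nat (Suc n - i) - of_nat i) * coeff p i * coeff q (Suc n - i))"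
    unfolding sum_subtractf[symmetric] by (intro sum.cong) (simp_all add: algebra_simps)
  finally show ?thesis .
qed

lemma minus_one_power_diff: "k \<le> m \<Longrightarrow> (-1::'a::ring_1) ^ (m - k) = (-1) ^ (m + k)"
  by (auto simp: minus_one_power_iff)

lemma cross_binomial_sum_eq_coeff:
  "real (n choose m) * real (b choose m) + (\<Sum>k=1..m. (-1) ^ k *
      (real (n choose (m + k)) * real (b choose (m - k))
       + real (n choose (m - k)) * real (b choose (m + k))))
   = (-1) ^ m * coeff ([:1, -1:] ^ n * [:1, 1:] ^ b) (2 * m)"
proof -
  let ?g = "\<lambda>i. (-1::real) ^ i * real (n choose i) * real (b choose (2 * m - i))"
  have "coeff ([:1, -1:] ^ n * [:1, 1:] ^ b) (2 * m) = (\<Sum>i=0..2*m. ?g i)"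
    unfolding coeff_mult coeff_one_plus_power atMost_atLeast0 by (simp add: mult_ac)
  also have "\<dots> = ?g m + (\<Sum>k=1..m. ?g (m + k) + ?g (m - k))"
    by (rule sum_fold_even)
  also have "\<dots> = (-1) ^ m * (real (n choose m) * real (b choose m) + (\<Sum>k=1..m. (-1) ^ k *
      (real (n choose (m + k)) * real (b choose (m - k))
       + real (n choose (m - k)) * real (b choose (m + k)))))"
    by (auto simp: mult_2 minus_one_power_diff power_add algebra_simps sum_distrib_left
        intro!: sum.cong)
  finally show ?thesis
    by (simp add: power_add[symmetric])
qed

lemma weighted_binomial_sum_eq_coeff:
  "2 * (-1) ^ m * (\<Sum>k=0..m. (-1) ^ k * (1 + 2 * real k)
      * real (n choose (m + 1 + k)) * real (n choose (m - k)))
   = coeff ([:1, -1:] ^ n * pderiv ([:1, 1:] ^ n) - pderiv ([:1, -1:] ^ n) * [:1, 1:] ^ n) (2 * m)"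
proof -
  let ?g = "\<lambda>i. (real (2 * m + 1 - i) - real i) * ((-1) ^ i * real (n choose i))
    * real (n choose (2 * m + 1 - i))"
  have "coeff ([:1, -1:] ^ n * pderiv ([:1, 1:] ^ n) - pderiv ([:1, -1:] ^ n) * [:1, 1:] ^ n) (2 * m)
      = (\<Sum>i=0..2*m+1. ?g i)"
    unfolding coeff_mult_pderiv_diff coeff_one_plus_power atMost_atLeast0 by (simp add: mult_ac)
  also have "\<dots> = (\<Sum>k=0..m. ?g (m - k) + ?g (m + 1 + k))"
    by (rule sum_fold_odd)
  also have "\<dots> = 2 * (-1) ^ m * (\<Sum>k=0..m. (-1) ^ k * (1 + 2 * real k)
      * real (n choose (m + 1 + k)) * real (n choose (m - k)))"
    by (auto simp: minus_one_power_diff power_add algebra_simps sum_distrib_left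
        intro!: sum.cong)
  finally show ?thesis ..
qed

lemma one_minus_times_one_plus_power:
  "[:1, -1:] ^ k * [:1, 1:] ^ k = ([:1, 0, -1:] ^ k :: 'a::comm_ring_1 poly)"
  by (simp add: power_mult_distrib[symmetric])

lemma binomial_powers_wronskian:
  "[:1, -1:] ^ n * pderiv ([:1, 1:] ^ n) - pderiv ([:1, -1:] ^ n) * [:1, 1:] ^ n
     = smult (2 * of_nat n) ([:1, 0, -1:] ^ (n - 1) :: 'a::idom poly)"
proof (cases n)
  case (Suc k)
  define A B :: "'a poly" where "A = [:1, -1:]" and "B = [:1, 1:]"
  have "pderiv A = -1" "pderiv B = 1"
    unfolding A_def B_def by (simp_all add: pderiv_pCons one_pCons)
  then have "A ^ n * pderiv (B ^ n) - pderiv (A ^ n) * B ^ n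
      = smult (of_nat n) (A ^ k * B ^ k * (A + B))"
    unfolding Suc pderiv_power_Suc by (simp add: algebra_simps smult_add_right)
  also have "\<dots> = smult (2 * of_nat n) ([:1, 0, -1:] ^ (n - 1))"
    unfolding A_def B_def one_minus_times_one_plus_power by (simp add: Suc mult.commute)
  finally show ?thesis
    unfolding A_def B_def .
qed simp

lemma coeff_even_binomial_powers_product:
  "(real q + 1) * coeff ([:1, -1:] ^ (q + 2) * [:1, 1:] ^ q) (2 * m)
     = (-1) ^ m * (real q + 1 - 2 * real m) * real (Suc q choose m)"
proof -
  define R :: "real poly" where "R = [:1, 0, -1:] ^ q"
  let ?P = "[:1, 0, -1:] ^ Suc q :: real poly"
  have product: "[:1, -1:] ^ (q + 2) * [:1, 1:] ^ q = [:1, -1:] ^ 2 * R"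
    unfolding R_def one_minus_times_one_plus_power[symmetric] by (simp only: power_add mult_ac)
  have P: "?P = R * [:1, 0, -1:]"
    by (simp add: R_def mult.commute)
  have dP: "pderiv ?P = smult (- 2 * (real q + 1)) (pCons 0 R)"
    unfolding R_def pderiv_power_Suc
    by (simp add: pderiv_pCons algebra_simps flip: smult_minus_left)
  have "smult (real q + 1) ([:1, -1:] ^ (q + 2) * [:1, 1:] ^ q)
      = smult (real q + 1) ?P - pCons 0 (pderiv ?P) + pderiv ?P"
    unfolding product dP unfolding P
    by (rule poly_eqI) (simp add: power2_eq_square coeff_pCons algebra_simps split: nat.split)
  then have "(real q + 1) * coeff ([:1, -1:] ^ (q + 2) * [:1, 1:] ^ q) (2 * m)
      = coeff (smult (real q + 1) ?P - pCons 0 (pderiv ?P) + pderiv ?P) (2 * m)"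
    by (metis coeff_smult)
  also have "\<dots> = (real q + 1 - of_nat (2 * m)) * coeff ?P (2 * m)
      + of_nat (Suc (2 * m)) * coeff ?P (2 * m + 1)"
    by (simp only: coeff_add coeff_diff coeff_smult coeff_pCons_0_pderiv coeff_pderiv
        left_diff_distrib Suc_eq_plus1)
  also have "\<dots> = (-1) ^ m * (real q + 1 - 2 * real m) * real (Suc q choose m)"
    unfolding coeff_one_minus_square_power_even coeff_one_minus_square_power_odd by simp
  finally show ?thesis .
qed

lemma cross_binomial_sum_closed_form:
  assumes "n \<ge> 2"
  shows "(real n - 1) * (real (n choose m) * real ((n - 2) choose m) + (\<Sum>k=1..m. (-1) ^ k *
      (real (n choose (m + k)) * real ((n - 2) choose (m - k))
       + real (n choose (m - k)) * real ((n - 2) choose (m + k)))))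
    = (real n - 1 - 2 * real m) * real ((n - 1) choose m)"
proof -
  obtain q where n: "n = q + 2"
    using assms by (metis le_add_diff_inverse2)
  have nq: "n - 2 = q" "n - 1 = Suc q" "real n - 1 = real q + 1"
    unfolding n by simp_all
  have sign: "(-1::real) ^ m * (-1) ^ m = 1"
    by (simp flip: power_add)
  show ?thesis
    unfolding cross_binomial_sum_eq_coeff nq mult.left_commute[of "real q + 1"]
    unfolding coeff_even_binomial_powers_product[of q m, folded n] mult.assoc[symmetric] sign
    by simp
qed

lemma weighted_binomial_sum_closed_form:
  "(\<Sum>k=0..m. (-1) ^ k * (1 + 2 * real k) * real (n choose (m + 1 + k)) * real (n choose (m - k)))
    = real n * real ((n - 1) choose m)" (is "?S = _")
proof -
  have "(2 * (-1) ^ m) * ?S = (2 * (-1) ^ m) * (real n * real ((n - 1) choose m))"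
    using weighted_binomial_sum_eq_coeff[of m n]
    unfolding binomial_powers_wronskian coeff_smult coeff_one_minus_square_power_even
    by (simp only: mult_ac)
  then show ?thesis
    by simp
qed

lemma real_choose_two: "real (n choose 2) = real n * (real n - 1) / 2"
proof (cases n)
  case (Suc p)
  have "2 * (n choose 2) = n * p"
    using Suc_times_binomial[of 1 p] unfolding Suc numeral_2_eq_2 by simp
  then have "2 * real (n choose 2) = real n * real p"
    by (metis of_nat_mult of_nat_numeral)
  then show ?thesis
    unfolding Suc by (simp add: field_simps)
qed simp

theorem proposition2p1:
  fixes n m :: nat
  assumes "n \<ge> 2" and "m \<le> n - 1"
  shows "K n m = real n ^ 2 / 2 * real ((n - 1) choose m)"
proof -
  let ?C = "real ((n - 1) choose m)"
  let ?E = "real (n choose m) * real ((n - 2) choose m) + (\<Sum>k=1..m. (-1) ^ k *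
      (real (n choose (m + k)) * real ((n - 2) choose (m - k))
       + real (n choose (m - k)) * real ((n - 2) choose (m + k))))"
  have E: "?E = (real n - 1 - 2 * real m) * ?C / (real n - 1)"
    using cross_binomial_sum_closed_form[OF assms(1), of m] assms(1) by (simp add: field_simps)
  have "K n m = - real (n choose 2) * ?E + (2 * real n - 2 * real m - 1) / 2 * (real n * ?C)"
    unfolding K_def weighted_binomial_sum_closed_form by (simp add: algebra_simps)
  also have "\<dots> = real n ^ 2 / 2 * ?C"
    unfolding E real_choose_two using assms(1) by (simp add: field_simps power2_eq_square)
  finally show ?thesis .
qed

end
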